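(* Let $(H_n)_{n\ge0}$ be the monic Hermite polynomials ($H_0=1$, $H_{-1}=0$, $H_n=xH_{n-1}-\tfrac{n-1}{2}H_{n-2}$), with coefficients $H_n(x)=\sum_{i=0}^n b_{n,i}x^i$ (convention $b_{m,m}=1$, $b_{m,l}=0$ for $l>m$). Let $(\gamma_m)_{m\ge1}$ be nonzero complex numbers with $\gamma_m\gamma_{m+1}=-\tfrac m2$ for all $m\ge1$. For integers $n\ge k\ge1$ and $0\le t\le k-1$ let $E_{k,n,t}$ be the determinant of the $(k-t-1)\times(k-t-1)$ matrix with $(\rho,c)$ entry $b_{n-k+t+1+c,\;n-k+t+\rho}$ ($E_{k,n,k-1}=1$), and define $$\Sigma_H(n,k)=\sum_{\substack{0\le j\le k-1\\ j \text{ even}}}\frac{(-1)^{j/2}}{2^j}\frac{(n-k+j)!}{(n-k)!\,(j/2)!}\sum_{r=1}^{k-j}\gamma_{n-k+j+1}\cdots\gamma_{n-k+j+r}\,E_{k,n,j+r-1}.$$ If $n$ is even, $k$ is odd and $n\ge k\ge3$, then $\Sigma_H(n,k)\neq0$.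
   Context: The hypothesis on $(\gamma_m)$ is the paper's standing assumption that $H_n^{(1)}=H_n+\gamma_nH_{n-1}$ is a Geronimus transformation of the Hermite polynomials normalized by $\gamma_2+\frac{1}{2\gamma_1}=0$, which yields $\gamma_m\gamma_{m+1}=-m/2$. *)

theory Defs
  imports "HOL-Computational_Algebra.Polynomial" "Jordan_Normal_Form.Determinant"
begin

fun hermite :: "nat \<Rightarrow> complex poly" where
  "hermite 0 = 1"
| "hermite (Suc 0) = [:0, 1:]"
| "hermite (Suc (Suc n)) = [:0, 1:] * hermite (Suc n) - smult (of_nat (n + 1) / 2) (hermite n)"

definition hb :: "nat \<Rightarrow> nat \<Rightarrow> complex" where
  "hb n i = coeff (hermite n) i"

text \<open>Jordan_Normal_Form matrices are 0-based,
  hence the shifts by one. The 0x0 determinant is 1.\<close>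
definition E_det :: "nat \<Rightarrow> nat \<Rightarrow> nat \<Rightarrow> complex" where
  "E_det k n t = det (mat (k - t - 1) (k - t - 1)
      (\<lambda>(i, j). hb (n - k + t + 1 + (j + 1)) (n - k + t + (i + 1))))"

definition Sigma_H :: "(nat \<Rightarrow> complex) \<Rightarrow> nat \<Rightarrow> nat \<Rightarrow> complex" where
  "Sigma_H \<gamma> n k =
     (\<Sum>j \<in> {j. j \<le> k - 1 \<and> even j}.
        ((-1) ^ (j div 2) / 2 ^ j) *
        (of_nat (fact (n - k + j)) / (of_nat (fact (n - k)) * of_nat (fact (j div 2)))) *
        (\<Sum>r = 1..k - j. (\<Prod>i = 1..r. \<gamma> (n - k + j + i)) * E_det k n (j + r - 1)))"

end

theory Submission
  imports Defs
begin

text \<open>The unitriangular matrix of Hermite coefficients b_{c+i,c+l} has as inverse the matrix of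
  coefficients of the monomials x^N in the Hermite basis, x^N = sum_l N!/(l! m! 4^m) H_l with
  N = l + 2m. Since E_{k,n,t} is, up to sign, a cofactor of the former, it is such a coefficient.
  With x H_l = H_{l+1} + (l/2) H_{l-1} and gamma_m gamma_{m+1} = -m/2 the inner sum over r then
  telescopes to a single term, and gamma_{p+1+2u}/gamma_{p+1} = ((p+2)/2)_u/((p+1)/2)_u. Writing
  k = 2K + 1 and p = n - k, Sigma_H(n,k) becomes a nonzero multiple of the terminating
  hypergeometric sum 2F1(-K, (p+2)/2; (p+1)/2; 1), which Chu-Vandermonde evaluates to
  (-1/2)_K / ((p+1)/2)_K, a nonzero number.\<close>

lemma adj_mat_eq_smult_left_inverse:
  fixes A B :: "'a :: comm_ring_1 mat"
  assumes A: "A \<in> carrier_mat n n" and B: "B \<in> carrier_mat n n" and BA: "B * A = 1\<^sub>m n"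
  shows "adj_mat A = det A \<cdot>\<^sub>m B"
proof -
  have adj: "adj_mat A \<in> carrier_mat n n" "A * adj_mat A = det A \<cdot>\<^sub>m 1\<^sub>m n"
    using adj_mat[OF A] by auto
  have "adj_mat A = (B * A) * adj_mat A" using BA adj by simp
  also have "\<dots> = B * (A * adj_mat A)" using A B adj by (simp add: assoc_mult_mat)
  also have "\<dots> = det A \<cdot>\<^sub>m B" using mult_smult_distrib[OF B one_carrier_mat] B adj by simp
  finally show ?thesis .
qed

lemma sum_prod_shift_Suc:
  fixes g h :: "nat \<Rightarrow> 'a :: comm_semiring_1"
  shows "(\<Sum>r = 1..Suc d. (\<Prod>i = 1..r. g i) * h r) =
    g 1 * h 1 + g 1 * (\<Sum>r = 1..d. (\<Prod>i = 1..r. g (Suc i)) * h (Suc r))"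
proof -
  have prod_Suc: "(\<Prod>i = 1..Suc r. g i) = g 1 * (\<Prod>i = 1..r. g (Suc i))" for r
  proof -
    have "(\<Prod>i = 1..Suc r. g i) = g 1 * (\<Prod>i = Suc 1..Suc r. g i)"
      by (rule prod.atLeast_Suc_atMost) simp
    also have "(\<Prod>i = Suc 1..Suc r. g i) = (\<Prod>i = 1..r. g (Suc i))"
      by (rule prod.shift_bounds_cl_Suc_ivl)
    finally show ?thesis .
  qed
  have "(\<Sum>r = 1..Suc d. (\<Prod>i = 1..r. g i) * h r) =
      (\<Prod>i = 1..1. g i) * h 1 + (\<Sum>r = Suc 1..Suc d. (\<Prod>i = 1..r. g i) * h r)"
    by (rule sum.atLeast_Suc_atMost) simp
  also have "(\<Sum>r = Suc 1..Suc d. (\<Prod>i = 1..r. g i) * h r) =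
      (\<Sum>r = 1..d. (\<Prod>i = 1..Suc r. g i) * h (Suc r))"
    by (rule sum.shift_bounds_cl_Suc_ivl)
  finally have "(\<Sum>r = 1..Suc d. (\<Prod>i = 1..r. g i) * h r) =
      (\<Prod>i = 1..1. g i) * h 1 + (\<Sum>r = 1..d. (\<Prod>i = 1..Suc r. g i) * h (Suc r))" .
  moreover have "(\<Prod>i = 1..1. g i) = g 1" by simp
  ultimately show ?thesis by (simp only: prod_Suc sum_distrib_left mult.assoc)
qed

lemma sum_even_atMost:
  fixes f :: "nat \<Rightarrow> 'a :: comm_monoid_add"
  shows "(\<Sum>j \<in> {j. j \<le> 2 * K \<and> even j}. f j) = (\<Sum>u\<le>K. f (2 * u))"
proof -
  have "{j. j \<le> 2 * K \<and> even j} = (\<lambda>u. 2 * u) ` {..K}" by (auto elim!: evenE)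
  then show ?thesis by (simp add: sum.reindex inj_on_def)
qed

lemma sum_alternating_binomial_Suc:
  fixes g :: "nat \<Rightarrow> 'a :: comm_ring_1"
  shows "(\<Sum>u\<le>Suc K. (-1) ^ u * of_nat (Suc K choose u) * g u) =
    (\<Sum>u\<le>K. (-1) ^ u * of_nat (K choose u) * g u) -
    (\<Sum>u\<le>K. (-1) ^ u * of_nat (K choose u) * g (Suc u))"
proof -
  have "(\<Sum>u\<le>Suc K. (-1) ^ u * of_nat (Suc K choose u) * g u) =
      g 0 + (\<Sum>u\<le>K. (-1) ^ Suc u * of_nat (Suc K choose Suc u) * g (Suc u))"
    by (subst sum.atMost_Suc_shift) simp
  also have "(\<Sum>u\<le>K. (-1) ^ Suc u * of_nat (Suc K choose Suc u) * g (Suc u)) =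
      (\<Sum>u\<le>K. (-1) ^ Suc u * of_nat (K choose Suc u) * g (Suc u) -
        (-1) ^ u * of_nat (K choose u) * g (Suc u))"
    by (rule sum.cong) (simp_all add: algebra_simps)
  also have "g 0 + \<dots> = g 0 + (\<Sum>u\<le>K. (-1) ^ Suc u * of_nat (K choose Suc u) * g (Suc u)) -
      (\<Sum>u\<le>K. (-1) ^ u * of_nat (K choose u) * g (Suc u))"
    by (simp add: sum_subtractf)
  also have "g 0 + (\<Sum>u\<le>K. (-1) ^ Suc u * of_nat (K choose Suc u) * g (Suc u)) =
      (\<Sum>u\<le>Suc K. (-1) ^ u * of_nat (K choose u) * g u)"
    by (subst sum.atMost_Suc_shift) simp
  also have "\<dots> = (\<Sum>u\<le>K. (-1) ^ u * of_nat (K choose u) * g u)"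
    by (simp add: binomial_eq_0)
  finally show ?thesis .
qed

lemma chu_vandermonde_pochhammer:
  fixes a b :: "'a :: field_char_0"
  assumes "\<And>j. a \<noteq> - of_nat j"
  shows "(\<Sum>u\<le>K. (-1) ^ u * of_nat (K choose u) * (pochhammer b u / pochhammer a u)) =
    pochhammer (a - b) K / pochhammer a K"
  using assms
proof (induction K arbitrary: a b)
  case (Suc K)
  define c where "c = a + of_nat K"
  have a: "a \<noteq> 0" "c \<noteq> 0" "pochhammer a K \<noteq> 0"
    using Suc.prems[of 0] Suc.prems[of K] Suc.prems
    by (auto simp: c_def pochhammer_eq_0_iff eq_neg_iff_add_eq_0)
  have "a + 1 \<noteq> - of_nat j" for j
    by (metis Suc.prems add.assoc eq_neg_iff_add_eq_0 of_nat_Suc)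
  then have IH_shift: "(\<Sum>u\<le>K. (-1) ^ u * of_nat (K choose u) *
      (pochhammer (b + 1) u / pochhammer (a + 1) u)) = pochhammer (a - b) K / pochhammer (a + 1) K"
    using Suc.IH[of "a + 1" "b + 1"] by simp
  have "pochhammer b (Suc u) / pochhammer a (Suc u) =
      b / a * (pochhammer (b + 1) u / pochhammer (a + 1) u)" for u
    by (simp add: pochhammer_rec)
  then have "(\<Sum>u\<le>Suc K. (-1) ^ u * of_nat (Suc K choose u) * (pochhammer b u / pochhammer a u)) =
      pochhammer (a - b) K / pochhammer a K - b / a * (pochhammer (a - b) K / pochhammer (a + 1) K)"
    using Suc.IH[of a b, OF Suc.prems] IH_shift
    by (simp only: sum_alternating_binomial_Suc mult.left_commute[of _ "b / a"]
        sum_distrib_left[symmetric] add_diff_cancel_right' diff_add_cancel)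
  also have "pochhammer (a + 1) K = c * pochhammer a K / a"
    using pochhammer_rec[of a K] pochhammer_rec'[of a K] a by (simp add: c_def field_simps)
  also have "pochhammer (a - b) K / pochhammer a K - b / a * (pochhammer (a - b) K / (c * pochhammer a K / a)) =
      (c - b) * pochhammer (a - b) K / (c * pochhammer a K)"
    using a by (simp add: c_def[symmetric] field_simps)
  also have "\<dots> = pochhammer (a - b) (Suc K) / pochhammer a (Suc K)"
    by (simp add: pochhammer_rec' c_def algebra_simps)
  finally show ?case .
qed simp

lemma Re_pos_neq_minus_of_nat: "0 < Re z \<Longrightarrow> z \<noteq> - of_nat j"
  by auto

lemma minus_half_neq_minus_of_nat: "(- 1 / 2 :: 'a :: field_char_0) \<noteq> - of_nat j"
proof
  assume "(- 1 / 2 :: 'a) = - of_nat j"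
  then have "of_nat (2 * j) = (of_nat 1 :: 'a)" by (simp add: field_simps)
  then have "2 * j = 1" by (simp only: of_nat_eq_iff)
  then show False by presburger
qed

section \<open>Monomials in the Hermite basis\<close>

lemma hermite_monic: "degree (hermite n) \<le> n \<and> coeff (hermite n) n = 1"
proof (induction n rule: hermite.induct)
  case (3 n)
  then show ?case by (auto intro!: degree_diff_le simp: coeff_eq_0)
qed auto

lemma hb_eq_0: "n < i \<Longrightarrow> hb n i = 0"
  using hermite_monic[of n] by (simp add: hb_def coeff_eq_0)

lemma hb_self: "hb n n = 1"
  using hermite_monic[of n] by (simp add: hb_def)

lemma x_mult_hermite:
  "[:0, 1:] * hermite l = hermite (Suc l) + smult (of_nat l / 2) (hermite (l - 1))"
proof (cases l)
  case (Suc l')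
  then show ?thesis by (cases l') (simp_all add: algebra_simps)
qed simp

definition monom_hermite_coeff :: "nat \<Rightarrow> nat \<Rightarrow> complex" where
  "monom_hermite_coeff N l = (if l \<le> N \<and> even (N - l) then
     fact N / (fact l * fact ((N - l) div 2) * 4 ^ ((N - l) div 2)) else 0)"

lemma monom_hermite_coeff_eq:
  "N = l + 2 * m \<Longrightarrow> monom_hermite_coeff N l = fact N / (fact l * fact m * 4 ^ m)"
  unfolding monom_hermite_coeff_def by simp

lemma monom_hermite_coeff_eq_0:
  "N < l \<or> odd (N - l) \<Longrightarrow> monom_hermite_coeff N l = 0"
  unfolding monom_hermite_coeff_def by auto

lemma monom_hermite_coeff_Suc_0:
  "monom_hermite_coeff (Suc N) 0 = monom_hermite_coeff N 1 / 2"
proof (cases "even N")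
  case False
  then obtain m where N: "N = 2 * m + 1" by (metis oddE)
  have closed_forms: "monom_hermite_coeff (Suc N) 0 = fact (Suc N) / (fact (Suc m) * 4 ^ Suc m)"
    "monom_hermite_coeff N 1 = fact N / (fact m * 4 ^ m)"
    using monom_hermite_coeff_eq[of "Suc N" 0 "Suc m"] monom_hermite_coeff_eq[of N 1 m] N by simp_all
  have "(of_nat (Suc N) :: complex) = 2 * of_nat (Suc m)" using N by simp
  then show ?thesis unfolding closed_forms fact_Suc[of N] fact_Suc[of m]
    by (simp add: field_simps del: of_nat_Suc)
qed (simp add: monom_hermite_coeff_def)

lemma monom_hermite_coeff_Suc_Suc:
  "monom_hermite_coeff (Suc N) (Suc j) =
     monom_hermite_coeff N j + of_nat (j + 2) / 2 * monom_hermite_coeff N (j + 2)"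
proof (cases "j \<le> N \<and> even (N - j)")
  case True
  then obtain m where N: "N = j + 2 * m" by (metis dvdE le_add_diff_inverse)
  show ?thesis
  proof (cases m)
    case 0
    then show ?thesis using N
      by (simp add: monom_hermite_coeff_eq monom_hermite_coeff_eq_0 del: of_nat_Suc)
  next
    case (Suc m')
    have closed_forms: "monom_hermite_coeff (Suc N) (Suc j) = fact (Suc N) / (fact (Suc j) * fact m * 4 ^ m)"
      "monom_hermite_coeff N j = fact N / (fact j * fact m * 4 ^ m)"
      "monom_hermite_coeff N (j + 2) = fact N / (fact (Suc (Suc j)) * fact m' * 4 ^ m')"
      using monom_hermite_coeff_eq[of "Suc N" "Suc j" m] monom_hermite_coeff_eq[of N j m]
        monom_hermite_coeff_eq[of N "j + 2" m'] N Suc by simp_all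
    have "(of_nat (Suc N) :: complex) = of_nat (Suc j) + 2 * of_nat m" using N by simp
    then show ?thesis unfolding closed_forms fact_Suc[of N] fact_Suc[of j] fact_Suc[of "Suc j"] Suc fact_Suc[of m']
      by (simp add: field_simps del: of_nat_Suc)
  qed
qed (auto simp: monom_hermite_coeff_def)

lemma monom_hermite_coeff_Suc:
  "monom_hermite_coeff (Suc N) l =
     (if l = 0 then 0 else monom_hermite_coeff N (l - 1)) +
     of_nat (l + 1) / 2 * monom_hermite_coeff N (l + 1)"
  by (cases l) (simp_all add: monom_hermite_coeff_Suc_0 monom_hermite_coeff_Suc_Suc)

lemma monom_eq_sum_hermite:
  "[:0, 1:] ^ N = (\<Sum>l\<le>N. smult (monom_hermite_coeff N l) (hermite l))"
proof (induction N)
  case 0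
  then show ?case by (simp add: monom_hermite_coeff_def)
next
  case (Suc N)
  let ?c = "monom_hermite_coeff N"
  have "[:0, 1:] ^ Suc N = (\<Sum>l\<le>N. smult (?c l) ([:0, 1:] * hermite l))"
    by (simp only: Suc power_Suc sum_distrib_left mult_smult_right)
  also have "\<dots> = (\<Sum>l\<le>N. smult (?c l) (hermite (Suc l))) +
      (\<Sum>l\<le>N. smult (?c l * of_nat l / 2) (hermite (l - 1)))"
    by (simp only: x_mult_hermite smult_add_right sum.distrib smult_smult times_divide_eq_right)
  also have "(\<Sum>l\<le>N. smult (?c l) (hermite (Suc l))) =
      (\<Sum>l\<le>Suc N. smult (if l = 0 then 0 else ?c (l - 1)) (hermite l))"
    by (subst sum.atMost_Suc_shift) simp
  also have "(\<Sum>l\<le>N. smult (?c l * of_nat l / 2) (hermite (l - 1))) =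
      (\<Sum>l\<le>Suc N. smult (of_nat (l + 1) / 2 * ?c (l + 1)) (hermite l))"
  proof -
    have "(\<Sum>l\<le>N. smult (?c l * of_nat l / 2) (hermite (l - 1))) =
        (\<Sum>l\<le>Suc N. smult (?c l * of_nat l / 2) (hermite (l - 1)))"
      by (simp add: monom_hermite_coeff_eq_0)
    also have "\<dots> = (\<Sum>l\<le>N. smult (of_nat (l + 1) / 2 * ?c (l + 1)) (hermite l))"
      by (subst sum.atMost_Suc_shift) (simp add: mult.commute)
    also have "\<dots> = (\<Sum>l\<le>Suc N. smult (of_nat (l + 1) / 2 * ?c (l + 1)) (hermite l))"
      by (simp add: monom_hermite_coeff_eq_0)
    finally show ?thesis .
  qed
  also have "(\<Sum>l\<le>Suc N. smult (if l = 0 then 0 else ?c (l - 1)) (hermite l)) +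
      (\<Sum>l\<le>Suc N. smult (of_nat (l + 1) / 2 * ?c (l + 1)) (hermite l)) =
      (\<Sum>l\<le>Suc N. smult (monom_hermite_coeff (Suc N) l) (hermite l))"
    by (simp only: monom_hermite_coeff_Suc smult_add_left sum.distrib)
  finally show ?case .
qed

lemma sum_monom_hermite_coeff_hb:
  "(\<Sum>l\<le>N. monom_hermite_coeff N l * hb l q) = (if q = N then 1 else 0)"
proof -
  have "(\<Sum>l\<le>N. monom_hermite_coeff N l * hb l q) = coeff ([:0, 1:] ^ N) q"
    by (simp add: monom_eq_sum_hermite coeff_sum hb_def)
  also have "\<dots> = (if q = N then 1 else 0)"
    by (metis coeff_monom monom_altdef smult_1_left)
  finally show ?thesis .
qed

section \<open>The determinants E as inverse matrix entries\<close>

definition hb_mat :: "nat \<Rightarrow> nat \<Rightarrow> complex mat" where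
  "hb_mat c m = mat m m (\<lambda>(i, l). hb (c + i) (c + l))"

definition monom_hermite_coeff_mat :: "nat \<Rightarrow> nat \<Rightarrow> complex mat" where
  "monom_hermite_coeff_mat c m = mat m m (\<lambda>(i, l). monom_hermite_coeff (c + i) (c + l))"

lemma monom_hermite_coeff_mat_mult_hb_mat:
  "monom_hermite_coeff_mat c m * hb_mat c m = 1\<^sub>m m"
proof (rule eq_matI)
  fix i q assume "i < dim_row (1\<^sub>m m)" "q < dim_col (1\<^sub>m m)"
  then have i: "i < m" and q: "q < m" by auto
  let ?g = "\<lambda>l. monom_hermite_coeff (c + i) l * hb l (c + q)"
  have "(monom_hermite_coeff_mat c m * hb_mat c m) $$ (i, q) = (\<Sum>l<m. ?g (c + l))"
    using i q by (simp add: monom_hermite_coeff_mat_def hb_mat_def scalar_prod_def atLeast0LessThan)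
  also have "\<dots> = sum ?g {c..<c + m}"
    using sum.shift_bounds_nat_ivl[of ?g 0 c m] by (simp add: atLeast0LessThan add.commute)
  also have "\<dots> = sum ?g {..<c + m}"
    by (rule sum.mono_neutral_left) (auto simp: hb_eq_0)
  also have "\<dots> = sum ?g {..c + i}"
    using i by (intro sum.mono_neutral_right) (auto simp: monom_hermite_coeff_eq_0)
  also have "\<dots> = 1\<^sub>m m $$ (i, q)"
    using i q by (simp add: sum_monom_hermite_coeff_hb)
  finally show "(monom_hermite_coeff_mat c m * hb_mat c m) $$ (i, q) = 1\<^sub>m m $$ (i, q)" .
qed (simp_all add: monom_hermite_coeff_mat_def hb_mat_def)

lemma det_hb_mat: "det (hb_mat c m) = 1"
proof -
  have "det (hb_mat c m) = prod_list (diag_mat (hb_mat c m))"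
    by (rule det_lower_triangular[of m]) (auto simp: hb_mat_def hb_eq_0)
  also have "diag_mat (hb_mat c m) = replicate m 1"
    by (rule nth_equalityI) (auto simp: diag_mat_def hb_mat_def hb_self)
  finally show ?thesis by simp
qed

text \<open>The matrix of E_det is the transpose of the minor of hb_mat obtained by deleting the first
  row and the last column, so by Cramer's rule it is a signed entry of the inverse matrix.\<close>

lemma E_det_eq:
  assumes "t < k" "k \<le> n"
  shows "E_det k n t = (-1) ^ (k - t - 1) * monom_hermite_coeff n (n - k + t + 1)"
proof -
  define c s where "c = n - k + t + 1" and "s = k - t - 1"
  let ?T = "hb_mat c (Suc s)"
  have T: "?T \<in> carrier_mat (Suc s) (Suc s)" by (simp add: hb_mat_def)
  have "E_det k n t = det (transpose_mat (mat_delete ?T 0 s))"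
    unfolding E_det_def c_def s_def
    by (rule arg_cong[of _ _ det], rule eq_matI) (auto simp: mat_delete_def hb_mat_def algebra_simps)
  also have "\<dots> = det (mat_delete ?T 0 s)"
    by (rule det_transpose[of _ s]) (simp add: mat_delete_def hb_mat_def)
  also have "\<dots> = (-1) ^ s * cofactor ?T 0 s"
    by (simp add: cofactor_def)
  also have "cofactor ?T 0 s = adj_mat ?T $$ (s, 0)"
    by (simp add: adj_mat_def hb_mat_def)
  also have "adj_mat ?T $$ (s, 0) = monom_hermite_coeff n c"
    using adj_mat_eq_smult_left_inverse[OF T _ monom_hermite_coeff_mat_mult_hb_mat] det_hb_mat assms
    by (simp add: monom_hermite_coeff_mat_def c_def s_def)
  finally show ?thesis by (simp add: c_def s_def)
qed

text \<open>Only the odd case is needed later; the even case carries the induction.\<close>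

lemma sum_gamma_prod_monom_hermite_coeff:
  fixes \<gamma> :: "nat \<Rightarrow> complex"
  assumes rel: "\<And>m. m \<ge> 1 \<Longrightarrow> \<gamma> m * \<gamma> (m + 1) = - (of_nat m / 2)"
    and "m + d = Suc N"
  shows "(\<Sum>r = 1..d. (\<Prod>i = 1..r. \<gamma> (m + i)) * ((-1) ^ (d - r) * monom_hermite_coeff (Suc N) (m + r))) =
    (if odd d then \<gamma> (m + 1) * monom_hermite_coeff N m
     else - (of_nat (m + 1) / 2) * monom_hermite_coeff N (m + 1))"
  using assms(2)
proof (induction d arbitrary: m)
  case 0
  then show ?case by (simp add: monom_hermite_coeff_eq_0)
next
  case (Suc d)
  then have N: "N = m + d" by simp
  have IH: "(\<Sum>r = 1..d. (\<Prod>i = 1..r. \<gamma> (Suc m + i)) * ((-1) ^ (d - r) * monom_hermite_coeff (Suc N) (Suc m + r))) =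
      (if odd d then \<gamma> (m + 2) * monom_hermite_coeff N (Suc m)
       else - (of_nat (m + 2) / 2) * monom_hermite_coeff N (m + 2))"
    using Suc.IH[of "Suc m"] Suc.prems by simp
  show ?case
  proof (cases "odd d")
    case True
    have "monom_hermite_coeff (Suc N) (Suc m) = 0"
      using True N by (intro monom_hermite_coeff_eq_0) simp
    moreover have "\<gamma> (Suc m) * \<gamma> (m + 2) = - (of_nat (Suc m) / 2)"
      using rel[of "Suc m"] by simp
    ultimately show ?thesis
      using True IH unfolding sum_prod_shift_Suc by (simp add: mult.assoc[symmetric])
  next
    case False
    from N have "monom_hermite_coeff (Suc N) (Suc m) =
        monom_hermite_coeff N m + of_nat (m + 2) / 2 * monom_hermite_coeff N (m + 2)"
      by (simp add: monom_hermite_coeff_Suc_Suc)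
    then show ?thesis
      using False IH unfolding sum_prod_shift_Suc by (simp add: algebra_simps)
  qed
qed

lemma Sigma_H_inner_sum:
  fixes \<gamma> :: "nat \<Rightarrow> complex"
  assumes rel: "\<And>m. m \<ge> 1 \<Longrightarrow> \<gamma> m * \<gamma> (m + 1) = - (of_nat m / 2)"
    and "j < k" "odd (k - j)" "k \<le> n"
  shows "(\<Sum>r = 1..k - j. (\<Prod>i = 1..r. \<gamma> (n - k + j + i)) * E_det k n (j + r - 1)) =
    \<gamma> (n - k + j + 1) * monom_hermite_coeff (n - 1) (n - k + j)"
proof -
  have "(\<Sum>r = 1..k - j. (\<Prod>i = 1..r. \<gamma> (n - k + j + i)) * E_det k n (j + r - 1)) =
      (\<Sum>r = 1..k - j. (\<Prod>i = 1..r. \<gamma> (n - k + j + i)) *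
        ((-1) ^ (k - j - r) * monom_hermite_coeff n (n - k + j + r)))"
  proof (rule sum.cong[OF refl])
    fix r assume "r \<in> {1..k - j}"
    then have r: "1 \<le> r" "r \<le> k - j" by auto
    have "E_det k n (j + r - 1) =
        (-1) ^ (k - (j + r - 1) - 1) * monom_hermite_coeff n (n - k + (j + r - 1) + 1)"
      using r assms(2,4) by (intro E_det_eq) auto
    also have "k - (j + r - 1) - 1 = k - j - r" using r by simp
    also have "n - k + (j + r - 1) + 1 = n - k + j + r" using r assms(2,4) by linarith
    finally show "(\<Prod>i = 1..r. \<gamma> (n - k + j + i)) * E_det k n (j + r - 1) =
        (\<Prod>i = 1..r. \<gamma> (n - k + j + i)) *
        ((-1) ^ (k - j - r) * monom_hermite_coeff n (n - k + j + r))"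
      by simp
  qed
  also have "\<dots> = \<gamma> (n - k + j + 1) * monom_hermite_coeff (n - 1) (n - k + j)"
  proof -
    have "Suc (n - 1) = n" using assms(2,4) by simp
    then show ?thesis
      using sum_gamma_prod_monom_hermite_coeff[OF rel, of "n - k + j" "k - j" "n - 1"] assms(2-4) by simp
  qed
  finally show ?thesis .
qed

lemma gamma_add_double_pochhammer:
  fixes \<gamma> :: "nat \<Rightarrow> complex"
  assumes rel: "\<And>m. m \<ge> 1 \<Longrightarrow> \<gamma> m * \<gamma> (m + 1) = - (of_nat m / 2)"
  shows "pochhammer ((of_nat p + 1) / 2) u * \<gamma> (p + 1 + 2 * u) =
    pochhammer ((of_nat p + 2) / 2) u * \<gamma> (p + 1)"
proof (induction u)
  case (Suc u)
  define m where "m = p + 1 + 2 * u"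
  have "\<gamma> m * \<gamma> (m + 1) = - (of_nat m / 2)" using rel[of m] by (simp add: m_def)
  moreover have "\<gamma> (m + 1) * \<gamma> (m + 2) = - (of_nat (m + 1) / 2)"
    using rel[of "m + 1"] by (simp add: add.assoc)
  moreover have "\<gamma> (m + 2) * (\<gamma> m * \<gamma> (m + 1)) = \<gamma> m * (\<gamma> (m + 1) * \<gamma> (m + 2))"
    by (simp only: mult_ac)
  ultimately have "\<gamma> (m + 2) * - (of_nat m / 2) = \<gamma> m * - (of_nat (m + 1) / 2)"
    by simp
  then have step: "of_nat m / 2 * \<gamma> (m + 2) = of_nat (m + 1) / 2 * \<gamma> m"
    by (simp add: field_simps)
  have a_u: "(of_nat p + 1) / 2 + of_nat u = (of_nat m / 2 :: complex)"
    and b_u: "(of_nat p + 2) / 2 + of_nat u = (of_nat (m + 1) / 2 :: complex)"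
    by (simp_all add: m_def field_simps)
  have "pochhammer ((of_nat p + 1) / 2) (Suc u) * \<gamma> (p + 1 + 2 * Suc u) =
      pochhammer ((of_nat p + 1) / 2) u * (of_nat m / 2 * \<gamma> (m + 2))"
    by (simp only: pochhammer_rec' a_u) (simp add: m_def)
  also have "\<dots> = of_nat (m + 1) / 2 * (pochhammer ((of_nat p + 1) / 2) u * \<gamma> m)"
    by (simp only: step mult_ac)
  also have "\<dots> = pochhammer ((of_nat p + 2) / 2) (Suc u) * \<gamma> (p + 1)"
    using Suc.IH by (simp only: pochhammer_rec' b_u m_def mult_ac)
  finally show ?case .
qed simp

lemma Sigma_H_summand_eq:
  fixes \<gamma> :: "nat \<Rightarrow> complex"
  assumes rel: "\<And>m. m \<ge> 1 \<Longrightarrow> \<gamma> m * \<gamma> (m + 1) = - (of_nat m / 2)"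
    and u: "u \<le> K"
  shows "(-1) ^ u / 2 ^ (2 * u) * (fact (p + 2 * u) / (fact p * fact u)) *
      (\<gamma> (p + 2 * u + 1) * monom_hermite_coeff (p + 2 * K) (p + 2 * u)) =
    \<gamma> (p + 1) * (fact (p + 2 * K) / (fact p * fact K * 4 ^ K)) *
      ((-1) ^ u * of_nat (K choose u) *
        (pochhammer ((of_nat p + 2) / 2) u / pochhammer ((of_nat p + 1) / 2) u))"
proof -
  have "(of_nat p + 1) / 2 \<noteq> - (of_nat j :: complex)" for j
    by (rule Re_pos_neq_minus_of_nat) simp
  then have poch: "pochhammer ((of_nat p + 1) / 2) u \<noteq> (0 :: complex)"
    by (simp only: pochhammer_eq_0_iff) blast
  then have \<gamma>: "\<gamma> (p + 2 * u + 1) = \<gamma> (p + 1) *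
      (pochhammer ((of_nat p + 2) / 2) u / pochhammer ((of_nat p + 1) / 2) u)"
    using gamma_add_double_pochhammer[OF rel, of p u] by (simp add: field_simps add_ac)
  have "p + 2 * K = p + 2 * u + 2 * (K - u)" using u by simp
  then have coeff: "monom_hermite_coeff (p + 2 * K) (p + 2 * u) =
      fact (p + 2 * K) / (fact (p + 2 * u) * fact (K - u) * 4 ^ (K - u))"
    by (rule monom_hermite_coeff_eq)
  have pow4: "(4 :: complex) ^ K = 4 ^ u * 4 ^ (K - u)" using u by (simp flip: power_add)
  have pow2: "(2 :: complex) ^ (2 * u) = 4 ^ u" by (simp add: power_mult)
  have binom: "of_nat (K choose u) = (fact K / (fact u * fact (K - u)) :: complex)"
    using binomial_fact[OF u] by simp
  show ?thesis
    unfolding \<gamma> coeff pow4 pow2 binom using poch by (simp add: field_simps)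
qed

lemma Sigma_H_eq_hypergeometric_sum:
  fixes \<gamma> :: "nat \<Rightarrow> complex"
  assumes rel: "\<And>m. m \<ge> 1 \<Longrightarrow> \<gamma> m * \<gamma> (m + 1) = - (of_nat m / 2)"
    and k: "k = 2 * K + 1" and "k \<le> n"
  shows "Sigma_H \<gamma> n k = \<gamma> (n - k + 1) * (fact (n - 1) / (fact (n - k) * fact K * 4 ^ K)) *
    (\<Sum>u\<le>K. (-1) ^ u * of_nat (K choose u) *
      (pochhammer ((of_nat (n - k) + 2) / 2) u / pochhammer ((of_nat (n - k) + 1) / 2) u))"
proof -
  obtain p where n: "n = p + k" using \<open>k \<le> n\<close> by (metis add.commute le_Suc_ex)
  have "Sigma_H \<gamma> n k = (\<Sum>u\<le>K. (-1) ^ (2 * u div 2) / 2 ^ (2 * u) *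
      (of_nat (fact (n - k + 2 * u)) / (of_nat (fact (n - k)) * of_nat (fact (2 * u div 2)))) *
      (\<Sum>r = 1..k - 2 * u. (\<Prod>i = 1..r. \<gamma> (n - k + 2 * u + i)) * E_det k n (2 * u + r - 1)))"
    unfolding Sigma_H_def k by (simp only: add_diff_cancel_right' sum_even_atMost)
  also have "\<dots> = (\<Sum>u\<le>K. \<gamma> (p + 1) * (fact (p + 2 * K) / (fact p * fact K * 4 ^ K)) *
      ((-1) ^ u * of_nat (K choose u) *
        (pochhammer ((of_nat p + 2) / 2) u / pochhammer ((of_nat p + 1) / 2) u)))"
    (is "sum ?f _ = sum ?g _")
  proof (rule sum.cong[OF refl])
    fix u assume "u \<in> {..K}"
    then have u: "u \<le> K" and "2 * u < k" "odd (k - 2 * u)" using k by auto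
    then have "?f u = (-1) ^ u / 2 ^ (2 * u) * (fact (p + 2 * u) / (fact p * fact u)) *
        (\<gamma> (p + 2 * u + 1) * monom_hermite_coeff (p + 2 * K) (p + 2 * u))"
      using Sigma_H_inner_sum[OF rel, of "2 * u" k n] n k by simp
    also have "\<dots> = ?g u" by (rule Sigma_H_summand_eq[OF rel u])
    finally show "?f u = ?g u" .
  qed
  finally show ?thesis by (simp add: sum_distrib_left n k)
qed

theorem theorem5:
  fixes \<gamma> :: "nat \<Rightarrow> complex" and n k :: nat
  assumes nonzero: "\<And>m. m \<ge> 1 \<Longrightarrow> \<gamma> m \<noteq> 0"
    and rel: "\<And>m. m \<ge> 1 \<Longrightarrow> \<gamma> m * \<gamma> (m + 1) = - (of_nat m / 2)"
    and "even n" and "odd k" and "k \<ge> 3" and "n \<ge> k"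
  shows "Sigma_H \<gamma> n k \<noteq> 0"
proof -
  define K where "K = k div 2"
  define a b :: complex where "a = (of_nat (n - k) + 1) / 2" and "b = (of_nat (n - k) + 2) / 2"
  have k: "k = 2 * K + 1" using \<open>odd k\<close> by (simp add: K_def)
  have a_regular: "a \<noteq> - of_nat j" for j by (rule Re_pos_neq_minus_of_nat) (simp add: a_def)
  have "a - b = - 1 / 2" by (simp add: a_def b_def field_simps)
  then have "Sigma_H \<gamma> n k = \<gamma> (n - k + 1) * (fact (n - 1) / (fact (n - k) * fact K * 4 ^ K)) *
      (pochhammer (- 1 / 2) K / pochhammer a K)"
    using Sigma_H_eq_hypergeometric_sum[OF rel k \<open>n \<ge> k\<close>] chu_vandermonde_pochhammer[OF a_regular, of K b]
    by (simp add: a_def b_def)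
  moreover have "pochhammer (- 1 / 2 :: complex) K \<noteq> 0" and "pochhammer a K \<noteq> 0"
    using minus_half_neq_minus_of_nat a_regular by (auto simp: pochhammer_eq_0_iff)
  moreover have "\<gamma> (n - k + 1) \<noteq> 0" by (rule nonzero) simp
  ultimately show ?thesis by simp
qed

end
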